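(* Let $\mathcal K\subseteq\mathbb{Z}$ be finite and $\Omega=\bigcup_{k\in\mathcal K}(k\pi-\pi/2,\,k\pi+\pi/2)$. Then $\tan:\Omega\to\mathbb{R}$ is amenable.
   Context: Relative distance on $\mathbb{R}$: $\mathrm{dist}(x,y)=0$ if $x=y=0$, $\mathrm{dist}(x,y)=|\log(y/x)|$ if $xy>0$, and $\mathrm{dist}(x,y)=\infty$ otherwise. For a real analytic function $f$ on an open set $\Omega\subseteq\mathbb{R}$, not identically zero, the condition number is $\kappa(f,x)=0$ if $x=0$, $\kappa(f,x)=\infty$ if $x\neq0$ and $f(x)=0$, and $\kappa(f,x)=|x|\,|f'(x)|/|f(x)|$ otherwise; $\mu(f,x)=1+\kappa(f,x)$. $f:\Omega\to\mathbb{R}$ is amenable if there is $C>0$ such that for every $x\in\Omega$ with $\kappa(f,x)<\infty$, the set $B_x=\{y\in\mathbb{R}:\mathrm{dist}(y,x)<1/(C\mu(f,x))\}$ is contained in $\Omega$ and $\mu(f,y)\leq C\mu(f,x)$ for all $y\in B_x$. *)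

theory Defs
  imports "HOL-Analysis.Analysis"
begin

definition reldist :: "real \<Rightarrow> real \<Rightarrow> ereal" where
  "reldist x y = (if x = 0 \<and> y = 0 then 0
                  else if x * y > 0 then ereal \<bar>ln (y / x)\<bar>
                  else \<infinity>)"

definition cond_num :: "(real \<Rightarrow> real) \<Rightarrow> real \<Rightarrow> ereal" where
  "cond_num f x = (if x = 0 then 0
                   else if f x = 0 then \<infinity>
                   else ereal (\<bar>x\<bar> * \<bar>deriv f x\<bar> / \<bar>f x\<bar>))"

definition mu_cond :: "(real \<Rightarrow> real) \<Rightarrow> real \<Rightarrow> ereal" where
  "mu_cond f x = 1 + cond_num f x"

definition amenable :: "(real \<Rightarrow> real) \<Rightarrow> real set \<Rightarrow> bool" where
  "amenable f \<Omega> \<longleftrightarrow> (\<exists>C::real. C > 0 \<and>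
     (\<forall>x\<in>\<Omega>. cond_num f x < \<infinity> \<longrightarrow>
        (let B = {y. reldist y x < ereal 1 / (ereal C * mu_cond f x)} in
          B \<subseteq> \<Omega> \<and> (\<forall>y\<in>B. mu_cond f y \<le> ereal C * mu_cond f x))))"

end

theory Submission
  imports Defs
begin

text \<open>Away from its zeros, \<open>\<kappa>(tan, x) = \<bar>x\<bar> / \<bar>sin x cos x\<bar>\<close>. A point \<open>y\<close> at relative distance
  below \<open>1 / (6 (1 + \<kappa>))\<close> from \<open>x\<close> satisfies \<open>\<bar>y - x\<bar> < \<bar>sin x cos x\<bar> / 3\<close> and
  \<open>\<bar>y\<bar> \<le> 4/3 \<bar>x\<bar>\<close>. As sine and cosine are 1-Lipschitz, \<open>\<bar>sin y\<bar>\<close> and \<open>\<bar>cos y\<bar>\<close> stay above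
  two thirds of \<open>\<bar>sin x\<bar>\<close> and \<open>\<bar>cos x\<bar>\<close>. Hence \<open>y\<close> cannot cross a zero of the cosine, i.e. leave
  the branch of \<open>x\<close>, and \<open>\<kappa>(tan, y) \<le> 3 \<kappa>(tan, x)\<close>; so \<open>C = 6\<close> works.\<close>

lemma abs_sin_diff_le: "\<bar>sin x - sin y\<bar> \<le> \<bar>x - y\<bar>" for x y :: real
proof -
  have "\<bar>sin x - sin y\<bar> = 2 * \<bar>sin ((x - y) / 2)\<bar> * \<bar>cos ((x + y) / 2)\<bar>"
    by (simp add: sin_diff_sin abs_mult)
  also have "\<dots> \<le> 2 * \<bar>(x - y) / 2\<bar> * 1"
    by (intro mult_mono abs_sin_x_le_abs_x) auto
  finally show ?thesis
    by simp
qed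

lemma abs_cos_diff_le: "\<bar>cos x - cos y\<bar> \<le> \<bar>x - y\<bar>" for x y :: real
proof -
  have "\<bar>cos x - cos y\<bar> = 2 * \<bar>sin ((x + y) / 2)\<bar> * \<bar>sin ((y - x) / 2)\<bar>"
    by (simp add: cos_diff_cos abs_mult)
  also have "\<dots> \<le> 2 * 1 * \<bar>(y - x) / 2\<bar>"
    by (intro mult_mono abs_sin_x_le_abs_x) auto
  finally show ?thesis
    by simp
qed

lemma abs_exp_minus_one_le:
  fixes t :: real
  assumes "\<bar>t\<bar> \<le> 1 / 2"
  shows "\<bar>exp t - 1\<bar> \<le> 2 * \<bar>t\<bar>"
proof -
  have "exp t \<le> exp \<bar>t\<bar>"
    by simp
  also have "\<dots> \<le> 1 + 2 * \<bar>t\<bar>"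
    using exp_bound_lemma[of "\<bar>t\<bar>"] assms by simp
  finally show ?thesis
    using exp_ge_add_one_self[of t] by linarith
qed

lemma reldist_less_imp_abs_diff_le:
  assumes "reldist y x < ereal r" "r \<le> 1 / 2" "x \<noteq> 0"
  shows "x * y > 0" "\<bar>y - x\<bar> \<le> 2 * r * \<bar>x\<bar>"
proof -
  from assms(1,3) have xy: "x * y > 0" and ln_less: "\<bar>ln (x / y)\<bar> < r"
    by (auto simp: reldist_def mult.commute split: if_splits)
  show "x * y > 0"
    by (fact xy)
  have "y / x > 0"
    using xy by (auto simp: zero_less_mult_iff zero_less_divide_iff)
  then have y_eq: "y = x * exp (ln (y / x))"
    using assms(3) by simp
  have "ln (x / y) = - ln (y / x)"
    using \<open>y / x > 0\<close> by (simp add: ln_div)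
  then have ln_eq: "\<bar>ln (y / x)\<bar> = \<bar>ln (x / y)\<bar>"
    by simp
  have "\<bar>y - x\<bar> = \<bar>x\<bar> * \<bar>exp (ln (y / x)) - 1\<bar>"
    by (subst y_eq) (simp add: abs_mult[symmetric] right_diff_distrib)
  also have "\<dots> \<le> \<bar>x\<bar> * (2 * r)"
    using abs_exp_minus_one_le[of "ln (y / x)"] ln_less ln_eq assms(2)
    by (intro mult_left_mono) auto
  finally show "\<bar>y - x\<bar> \<le> 2 * r * \<bar>x\<bar>"
    by (simp add: ac_simps)
qed

definition tan_branch :: "int \<Rightarrow> real set" where
  "tan_branch k = {real_of_int k * pi - pi / 2 <..< real_of_int k * pi + pi / 2}"

lemma cos_nonzero_tan_branch:
  assumes "x \<in> tan_branch k"
  shows "cos x \<noteq> 0"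
proof
  assume "cos x = 0"
  then obtain j where "x = real_of_int j * pi + pi / 2"
    by (auto simp: cos_zero_iff_int2)
  with assms have "real_of_int (k - 1) * pi < real_of_int j * pi" "real_of_int j * pi < real_of_int k * pi"
    by (auto simp: tan_branch_def algebra_simps)
  then have "k - 1 < j" "j < k"
    by (simp_all only: mult_less_cancel_right_pos[OF pi_gt_zero] of_int_less_iff)
  then show False
    by linarith
qed

text \<open>The ends of a branch are zeros of the cosine, so their distance to \<open>x\<close> is at least \<open>\<bar>cos x\<bar>\<close>.\<close>
lemma mem_tan_branch_if_close:
  assumes "x \<in> tan_branch k" "\<bar>y - x\<bar> < \<bar>cos x\<bar>"
  shows "y \<in> tan_branch k"
proof -
  define a b where "a = real_of_int k * pi - pi / 2" and "b = real_of_int k * pi + pi / 2"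
  have "cos a = 0" "cos b = 0"
    by (simp_all add: a_def b_def cos_diff cos_add mult.commute)
  then have "\<bar>cos x\<bar> \<le> \<bar>x - a\<bar>" "\<bar>cos x\<bar> \<le> \<bar>x - b\<bar>"
    using abs_cos_diff_le[of x a] abs_cos_diff_le[of x b] by simp_all
  with assms show ?thesis
    unfolding tan_branch_def a_def[symmetric] b_def[symmetric] by auto
qed

definition tan_cond :: "real \<Rightarrow> real" where
  "tan_cond x = \<bar>x\<bar> / \<bar>sin x * cos x\<bar>"

lemma tan_cond_nonneg: "tan_cond x \<ge> 0"
  by (simp add: tan_cond_def)

lemma cond_num_tan:
  assumes "sin x * cos x \<noteq> 0" "x \<noteq> 0"
  shows "cond_num tan x = ereal (tan_cond x)"
proof -
  have "sin x \<noteq> 0" "cos x \<noteq> 0"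
    using assms(1) by simp_all
  have deriv_tan: "deriv tan x = inverse ((cos x)\<^sup>2)"
    using \<open>cos x \<noteq> 0\<close> by (intro DERIV_imp_deriv DERIV_tan)
  have tan_eq: "tan x = sin x / cos x"
    by (simp add: tan_def)
  have "\<bar>x\<bar> * \<bar>deriv tan x\<bar> / \<bar>tan x\<bar> = tan_cond x"
    unfolding deriv_tan tan_eq tan_cond_def using \<open>sin x \<noteq> 0\<close> \<open>cos x \<noteq> 0\<close>
    by (simp add: abs_mult power2_eq_square field_simps)
  with assms show ?thesis
    by (simp add: cond_num_def tan_eq)
qed

lemma abs_diff_less_abs_sin_cos:
  assumes "sin x * cos x \<noteq> 0" "\<bar>y - x\<bar> \<le> \<bar>x\<bar> / (3 * (1 + tan_cond x))"
  shows "\<bar>y - x\<bar> < \<bar>sin x * cos x\<bar> / 3"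
proof -
  define p where "p = \<bar>sin x * cos x\<bar>"
  have "p > 0"
    using assms(1) by (simp add: p_def)
  have "\<bar>y - x\<bar> \<le> \<bar>x\<bar> / (3 * (1 + \<bar>x\<bar> / p))"
    using assms(2) by (simp add: p_def tan_cond_def)
  also have "\<dots> = p / 3 * (\<bar>x\<bar> / (p + \<bar>x\<bar>))"
    using \<open>p > 0\<close> by (simp add: field_simps)
  also have "\<dots> < p / 3"
    using \<open>p > 0\<close> by (simp add: divide_less_eq)
  finally show ?thesis
    by (simp add: p_def)
qed

lemma tan_cond_stable:
  assumes "sin x * cos x \<noteq> 0" "\<bar>y - x\<bar> < \<bar>sin x * cos x\<bar> / 3" "\<bar>y\<bar> \<le> 4 / 3 * \<bar>x\<bar>"
  shows "sin y * cos y \<noteq> 0" "tan_cond y \<le> 3 * tan_cond x"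
proof -
  define s c where "s = \<bar>sin x\<bar>" and "c = \<bar>cos x\<bar>"
  have "s > 0" "c > 0" "s \<le> 1" "c \<le> 1"
    using assms(1) by (auto simp: s_def c_def)
  then have "s * c \<le> s" "s * c \<le> c"
    by (simp_all add: mult_left_le mult_left_le_one_le)
  moreover have "\<bar>y - x\<bar> < s * c / 3"
    using assms(2) by (simp add: s_def c_def abs_mult)
  ultimately have sin_y: "\<bar>sin y\<bar> \<ge> 2 / 3 * s" and cos_y: "\<bar>cos y\<bar> \<ge> 2 / 3 * c"
    using abs_sin_diff_le[of x y] abs_cos_diff_le[of x y] abs_minus_commute[of x y]
      abs_triangle_ineq2[of "sin x" "sin y"] abs_triangle_ineq2[of "cos x" "cos y"]
    unfolding s_def c_def by linarith+
  with \<open>s > 0\<close> \<open>c > 0\<close> show "sin y * cos y \<noteq> 0"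
    by auto
  have "\<bar>y\<bar> / (\<bar>sin y\<bar> * \<bar>cos y\<bar>) \<le> (4 / 3 * \<bar>x\<bar>) / ((2 / 3 * s) * (2 / 3 * c))"
    using assms(3) sin_y cos_y \<open>s > 0\<close> \<open>c > 0\<close> by (intro frac_le mult_mono) auto
  also have "\<dots> = 3 * (\<bar>x\<bar> / (s * c))"
    using \<open>s > 0\<close> \<open>c > 0\<close> by (simp add: field_simps)
  finally show "tan_cond y \<le> 3 * tan_cond x"
    by (simp add: tan_cond_def s_def c_def abs_mult)
qed

lemma tan_cond_stable_on_branch:
  assumes "x \<in> tan_branch k" "sin x \<noteq> 0" "\<bar>y - x\<bar> \<le> \<bar>x\<bar> / (3 * (1 + tan_cond x))"
  shows "y \<in> tan_branch k" "sin y * cos y \<noteq> 0" "tan_cond y \<le> 3 * tan_cond x"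
proof -
  have sc: "sin x * cos x \<noteq> 0"
    using assms(2) cos_nonzero_tan_branch[OF assms(1)] by simp
  have near: "\<bar>y - x\<bar> < \<bar>sin x * cos x\<bar> / 3"
    using abs_diff_less_abs_sin_cos[OF sc assms(3)] .
  have "\<bar>x\<bar> / (3 * (1 + tan_cond x)) \<le> \<bar>x\<bar> / 3"
    using tan_cond_nonneg[of x] by (intro divide_left_mono) auto
  then have "\<bar>y\<bar> \<le> 4 / 3 * \<bar>x\<bar>"
    using assms(3) abs_triangle_ineq2[of y x] by linarith
  with sc near show "sin y * cos y \<noteq> 0" "tan_cond y \<le> 3 * tan_cond x"
    by (rule tan_cond_stable)+
  have "\<bar>sin x * cos x\<bar> \<le> \<bar>cos x\<bar>"
    unfolding abs_mult by (intro mult_left_le_one_le abs_sin_le_one abs_ge_zero)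
  with near have "\<bar>y - x\<bar> < \<bar>cos x\<bar>"
    by linarith
  with assms(1) show "y \<in> tan_branch k"
    by (rule mem_tan_branch_if_close)
qed

lemma tan_amenable_at:
  assumes "x \<in> tan_branch k" "cond_num tan x < \<infinity>"
    and "reldist y x < ereal 1 / (ereal 6 * mu_cond tan x)"
  shows "y \<in> tan_branch k \<and> mu_cond tan y \<le> ereal 6 * mu_cond tan x"
proof (cases "x = 0")
  case True
  then have "y = 0"
    using assms(3) by (simp add: mu_cond_def cond_num_def reldist_def split: if_splits)
  with True assms(1) show ?thesis
    by (simp add: mu_cond_def cond_num_def)
next
  case False
  have "sin x \<noteq> 0"
    using assms(2) False by (auto simp: cond_num_def tan_def)
  with cos_nonzero_tan_branch[OF assms(1)] have mu_x: "mu_cond tan x = ereal (1 + tan_cond x)"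
    by (simp add: mu_cond_def cond_num_tan False)
  have "reldist y x < ereal (1 / (6 * (1 + tan_cond x)))"
    using assms(3) tan_cond_nonneg[of x] by (simp add: mu_x)
  from reldist_less_imp_abs_diff_le[OF this _ False] tan_cond_nonneg[of x]
  have "x * y > 0" and close: "\<bar>y - x\<bar> \<le> \<bar>x\<bar> / (3 * (1 + tan_cond x))"
    by (simp_all add: field_simps)
  note on_branch = tan_cond_stable_on_branch[OF assms(1) \<open>sin x \<noteq> 0\<close> close]
  have "y \<noteq> 0"
    using \<open>x * y > 0\<close> by auto
  then have "mu_cond tan y = ereal (1 + tan_cond y)"
    by (simp add: mu_cond_def cond_num_tan[OF on_branch(2)])
  also have "\<dots> \<le> ereal 6 * mu_cond tan x"
    using on_branch(3) tan_cond_nonneg[of x] by (simp add: mu_x)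
  finally show ?thesis
    using on_branch(1) by simp
qed

theorem mainTheorem11:
  fixes K :: "int set"
  assumes "finite K"
  shows "amenable tan (\<Union>k\<in>K. {real_of_int k * pi - pi / 2 <..< real_of_int k * pi + pi / 2})"
proof -
  have "amenable tan (\<Union>k\<in>K. tan_branch k)"
    unfolding amenable_def Let_def
  proof (intro exI[of _ 6] conjI ballI impI subsetI)
    fix x y
    assume "x \<in> (\<Union>k\<in>K. tan_branch k)" "cond_num tan x < \<infinity>"
      and "y \<in> {y. reldist y x < ereal 1 / (ereal 6 * mu_cond tan x)}"
    then obtain k where "k \<in> K"
      and "y \<in> tan_branch k \<and> mu_cond tan y \<le> ereal 6 * mu_cond tan x"
      using tan_amenable_at by blast
    then show "y \<in> (\<Union>k\<in>K. tan_branch k)" "mu_cond tan y \<le> ereal 6 * mu_cond tan x"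
      by auto
  qed simp
  then show ?thesis
    by (simp add: tan_branch_def)
qed

end
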